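(* In the D-RR setting under the nonconvex assumptions, let $\alpha_t=\alpha$ for all $t$ with $$0<\alpha\le\min\Big\{\frac{1-\rho_w^2}{4\sqrt3\,L(m+2)},\ \frac{(1-\rho_w^2)^{3/2}}{16\sqrt6\,L}\Big\},$$ and define $Q_t:=f(\bar x_t^0)-\bar f+\frac{16\alpha L^2}{n(1-\rho_w^2)^2}\|\mathbf x_t^0-\mathbf 1(\bar x_t^0)^\intercal\|^2$. Then for every epoch $t$ (and every realization of the permutations), $$Q_{t+1}\le\Big[1+\frac{12m^2\alpha^3L^2A(4+m)}{1-\rho_w^2}+\frac{384A\alpha^3L^2m}{(1-\rho_w^2)^3}\Big]Q_t-\frac{m\alpha}{4}\|\nabla f(\bar x_t^0)\|^2+\frac{6m\alpha^3L^2B^2[m(m+4)+32]}{(1-\rho_w^2)^3}.$$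
   Context: D-RR setting. Let $n,m,p\ge1$ be integers and $[k]=\{1,\dots,k\}$. For $i\in[n]$, $\ell\in[m]$ let $f_{i,\ell}:\mathbb{R}^p\to\mathbb{R}$ be differentiable; $f_i:=\frac1m\sum_{\ell=1}^m f_{i,\ell}$, $f:=\frac1n\sum_{i=1}^n f_i$. Let $W=(w_{ij})\in\mathbb{R}^{n\times n}$ be nonnegative, symmetric, with $W\mathbf 1=\mathbf 1$, compliant with an undirected connected graph on $[n]$ (for $i\ne j$, $w_{ij}>0$ iff $\{i,j\}$ is an edge); $\rho_w$ is the spectral norm of $W-\frac1n\mathbf 1\mathbf 1^\intercal$ (so $\rho_w<1$). The D-RR algorithm: given initial points $x_{i,0}\in\mathbb{R}^p$ and stepsizes $\alpha_t>0$, at each epoch $t=0,1,\dots$ each agent $i$ draws a permutation $(\pi^i_0,\dots,\pi^i_{m-1})$ of $[m]$ uniformly at random, independently across agents and epochs; sets $x^0_{i,t}=x_{i,t}$; for $\ell=0,\dots,m-1$ sets $x^{\ell+1}_{i,t}=\sum_{j=1}^n w_{ij}\big(x^\ell_{j,t}-\alpha_t\nabla f_{j,\pi^j_\ell}(x^\ell_{j,t})\big)$; sets $x_{i,t+1}=x^m_{i,t}$. Notation: $\mathbf{x}_t^\ell\in\mathbb{R}^{n\times p}$ has $i$-th row $(x^\ell_{i,t})^\intercal$; $\bar x_t^\ell=\frac1n\sum_i x^\ell_{i,t}$; $\mathbf 1(\bar x_t^\ell)^\intercal$ is the $n\times p$ matrix all of whose rows equal $(\bar x_t^\ell)^\intercal$;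 $\|\cdot\|$ is Euclidean/Frobenius norm. Nonconvex assumptions: each $f_{i,\ell}$ has $L$-Lipschitz gradient and satisfies $f_{i,\ell}\ge\bar f_{i,\ell}$ for some constant $\bar f_{i,\ell}\in\mathbb{R}$; $\bar f:=\inf_x f(x)$; $A:=2L$; $B^2:=2L\big(\bar f-\frac{1}{mn}\sum_{i,\ell}\bar f_{i,\ell}\big)$. *)

theory Defs
  imports "HOL-Analysis.Analysis"
begin

text \<open>Agents are indexed by a finite type 'n (n = CARD('n)); points of R^p live in a
Euclidean space 'v (p = DIM('v)); local samples are indexed by 0..m-1.
W is a real ^'n^'n matrix; a state (an n x p matrix) is a function 'n => 'v.\<close>

definition gossip_ok :: "real^'n^'n \<Rightarrow> bool" where
  "gossip_ok W \<longleftrightarrow>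
     (\<forall>i j. W$i$j \<ge> 0) \<and> (\<forall>i j. W$i$j = W$j$i) \<and> (\<forall>i. (\<Sum>j\<in>UNIV. W$i$j) = 1) \<and>
     (\<forall>i j. (\<lambda>a b. a \<noteq> b \<and> W$a$b > 0)\<^sup>*\<^sup>* i j)"

definition rho_w :: "real^'n^'n \<Rightarrow> real" where
  "rho_w W = onorm (\<lambda>v. (W - (\<chi> i j. 1 / real CARD('n))) *v v)"

definition drr_step :: "real^'n^'n \<Rightarrow> ('n \<Rightarrow> nat \<Rightarrow> 'v \<Rightarrow> 'v::real_normed_vector)
    \<Rightarrow> real \<Rightarrow> ('n \<Rightarrow> nat) \<Rightarrow> ('n \<Rightarrow> 'v) \<Rightarrow> ('n \<Rightarrow> 'v)" where
  "drr_step W g \<alpha> s x = (\<lambda>i. \<Sum>j\<in>UNIV. W$i$j *\<^sub>R (x j - \<alpha> *\<^sub>R g j (s j) (x j)))"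

text \<open>Inner iterates within an epoch: drr_inner ... perm l x = x^l, with perm j l = pi^j_l.\<close>
primrec drr_inner :: "real^'n^'n \<Rightarrow> ('n \<Rightarrow> nat \<Rightarrow> 'v \<Rightarrow> 'v::real_normed_vector)
    \<Rightarrow> real \<Rightarrow> ('n \<Rightarrow> nat \<Rightarrow> nat) \<Rightarrow> nat \<Rightarrow> ('n \<Rightarrow> 'v) \<Rightarrow> ('n \<Rightarrow> 'v)" where
  "drr_inner W g \<alpha> perm 0 x = x"
| "drr_inner W g \<alpha> perm (Suc l) x = drr_step W g \<alpha> (\<lambda>j. perm j l) (drr_inner W g \<alpha> perm l x)"

text \<open>Epoch iterates x_t = x_t^0 with stepsizes alpha t; pi t j l = pi^j_l at epoch t.\<close>
primrec drr :: "real^'n^'n \<Rightarrow> ('n \<Rightarrow> nat \<Rightarrow> 'v \<Rightarrow> 'v::real_normed_vector)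
    \<Rightarrow> (nat \<Rightarrow> real) \<Rightarrow> nat \<Rightarrow> (nat \<Rightarrow> 'n \<Rightarrow> nat \<Rightarrow> nat) \<Rightarrow> ('n \<Rightarrow> 'v) \<Rightarrow> nat \<Rightarrow> ('n \<Rightarrow> 'v)" where
  "drr W g \<alpha> m \<pi> x0 0 = x0"
| "drr W g \<alpha> m \<pi> x0 (Suc t) = drr_inner W g (\<alpha> t) (\<pi> t) m (drr W g \<alpha> m \<pi> x0 t)"

definition avg_pt :: "('n::finite \<Rightarrow> 'v::real_vector) \<Rightarrow> 'v" where
  "avg_pt x = (1 / real CARD('n)) *\<^sub>R (\<Sum>i\<in>UNIV. x i)"

text \<open>Squared Frobenius norm of x - 1 xbar^T.\<close>
definition consensus_err :: "('n::finite \<Rightarrow> 'v::real_normed_vector) \<Rightarrow> real" where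
  "consensus_err x = (\<Sum>i\<in>UNIV. (norm (x i - avg_pt x))\<^sup>2)"

definition global_f :: "nat \<Rightarrow> ('n::finite \<Rightarrow> nat \<Rightarrow> 'v \<Rightarrow> real) \<Rightarrow> 'v \<Rightarrow> real" where
  "global_f m f x = (1 / real CARD('n)) * (\<Sum>i\<in>UNIV. (1 / real m) * (\<Sum>l<m. f i l x))"

definition global_grad :: "nat \<Rightarrow> ('n::finite \<Rightarrow> nat \<Rightarrow> 'v \<Rightarrow> 'v::real_vector) \<Rightarrow> 'v \<Rightarrow> 'v" where
  "global_grad m g x = (1 / real CARD('n)) *\<^sub>R (\<Sum>i\<in>UNIV. (1 / real m) *\<^sub>R (\<Sum>l<m. g i l x))"

end

theory Submission
  imports Defs
begin

text \<open>Within an epoch every iterate is compared with the anchor, the average at the start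
  of the epoch. Since each sample is used exactly once, the average moves by m \<alpha> times the
  global gradient at the anchor, up to an error controlled by the spread of the iterates
  around the anchor, and the descent lemma yields the decrease - m \<alpha> / 4 norm (grad f)^2.
  Each mixing step contracts the consensus error by rho_w^2, which gives a linear recursion
  driven by the gradient budget: the spread plus the squared sample gradients at the anchor,
  the latter bounded by 2 L (f - fbar) + B^2 through smoothness and the lower bounds. The
  step-size conditions make the budget feed back into itself with gain at most 1/48, so the
  consensus part of Q absorbs everything except the factor 1 + \<kappa> and the additive term.\<close>

section \<open>Elementary inequalities\<close>

lemma power2_norm_sum_le:
  fixes z :: "'i \<Rightarrow> 'v::real_normed_vector"
  assumes "finite I"
  shows "(norm (\<Sum>i\<in>I. z i))\<^sup>2 \<le> real (card I) * (\<Sum>i\<in>I. (norm (z i))\<^sup>2)"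
proof -
  have "(norm (\<Sum>i\<in>I. z i))\<^sup>2 \<le> (\<Sum>i\<in>I. norm (z i))\<^sup>2"
    by (rule power_mono[OF norm_sum]) simp
  also have "\<dots> \<le> (\<Sum>i\<in>I. (norm (z i))\<^sup>2) * real (card I)" by (rule sum_squared_le_sum_of_squares)
  finally show ?thesis by (simp add: mult.commute)
qed

lemma power2_norm_add_le:
  "(norm (a + b :: 'v::real_normed_vector))\<^sup>2 \<le> 2 * (norm a)\<^sup>2 + 2 * (norm b)\<^sup>2"
proof -
  have "(norm (a + b))\<^sup>2 \<le> (norm a + norm b)\<^sup>2" by (rule power_mono[OF norm_triangle_ineq]) simp
  also have "\<dots> \<le> 2 * (norm a)\<^sup>2 + 2 * (norm b)\<^sup>2"
    using sum_squares_bound[of "norm a" "norm b"] by (simp add: power2_eq_square algebra_simps)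
  finally show ?thesis .
qed

lemma scaled_power2_norm_diff_le:
  fixes a b :: "'v::real_normed_vector" and r :: real
  assumes "0 \<le> r" and "r < 1"
  shows "r * (norm (a - b))\<^sup>2 \<le> (1 + r) / 2 * (norm a)\<^sup>2 + 2 / (1 - r) * (norm b)\<^sup>2"
proof -
  define x where "x = norm a"
  define y where "y = norm b"
  have "r * (norm (a - b))\<^sup>2 \<le> r * (x + y)\<^sup>2"
    unfolding x_def y_def using \<open>0 \<le> r\<close>
    by (intro mult_left_mono power_mono norm_triangle_ineq4) simp_all
  also have "\<dots> \<le> (1 + r) / 2 * x\<^sup>2 + 2 / (1 - r) * y\<^sup>2"
  proof -
    have "2 * (1 - r) * ((1 + r) / 2 * x\<^sup>2 + 2 / (1 - r) * y\<^sup>2 - r * (x + y)\<^sup>2)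
        = ((1 - r) * x - 2 * r * y)\<^sup>2 + 2 * (1 - r) * (2 + r) * y\<^sup>2"
      using \<open>r < 1\<close> by (simp add: power2_eq_square field_simps)
    also have "\<dots> \<ge> 0" using assms by simp
    finally show ?thesis using \<open>r < 1\<close> by (simp add: zero_le_mult_iff)
  qed
  finally show ?thesis unfolding x_def y_def .
qed

lemma le_divide_one_minus_if_le_add_mult:
  fixes P X \<theta> r :: real
  assumes "P \<le> X + \<theta> * P" "0 \<le> \<theta>" "\<theta> \<le> r" "r < 1" "0 \<le> X"
  shows "P \<le> X / (1 - r)"
proof (cases "P < 0")
  case True
  then show ?thesis using assms by (smt (verit) divide_nonneg_pos)
next
  case False
  then have "\<theta> * P \<le> r * P" using assms by (intro mult_right_mono) simp_all
  then show ?thesis using assms by (simp add: le_divide_eq algebra_simps)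
qed

lemma Lipschitz_gradient_upper_bound:
  fixes h :: "'v::euclidean_space \<Rightarrow> real" and G :: "'v \<Rightarrow> 'v"
  assumes deriv: "\<And>x. (h has_derivative (\<lambda>d. G x \<bullet> d)) (at x)"
    and lip: "\<And>x y. norm (G x - G y) \<le> L * norm (x - y)"
  shows "h y \<le> h x + G x \<bullet> (y - x) + L / 2 * (norm (y - x))\<^sup>2"
proof -
  define d where "d = y - x"
  define \<psi> where "\<psi> s = h (x + s *\<^sub>R d) - s * (G x \<bullet> d) - L / 2 * s\<^sup>2 * (norm d)\<^sup>2" for s
  have "\<psi> 1 \<le> \<psi> 0"
  proof (rule DERIV_nonpos_imp_nonincreasing[of 0 1])
    fix s :: real assume s0: "0 \<le> s" and "s \<le> 1"
    have "((\<lambda>s. x + s *\<^sub>R d) has_derivative (\<lambda>t. t *\<^sub>R d)) (at s)"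
      by (auto intro!: derivative_eq_intros)
    from diff_chain_at[OF this deriv]
    have "((\<lambda>s. h (x + s *\<^sub>R d)) has_real_derivative (G (x + s *\<^sub>R d) \<bullet> d)) (at s)"
      by (simp add: o_def has_field_derivative_def mult.commute[of _ "G (x + s *\<^sub>R d) \<bullet> d"])
    then have \<psi>': "(\<psi> has_real_derivative (G (x + s *\<^sub>R d) - G x) \<bullet> d - L * s * (norm d)\<^sup>2) (at s)"
      unfolding \<psi>_def by (auto intro!: derivative_eq_intros simp: inner_diff_left)
    have "(G (x + s *\<^sub>R d) - G x) \<bullet> d \<le> norm (G (x + s *\<^sub>R d) - G x) * norm d"
      by (rule norm_cauchy_schwarz)
    also have "\<dots> \<le> L * norm (s *\<^sub>R d) * norm d"
      using lip[of "x + s *\<^sub>R d" x] by (simp add: mult_right_mono)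
    also have "\<dots> = L * s * (norm d)\<^sup>2" using s0 by (simp add: power2_eq_square)
    finally show "\<exists>y. (\<psi> has_real_derivative y) (at s) \<and> y \<le> 0" using \<psi>' by force
  qed simp
  then show ?thesis unfolding \<psi>_def d_def by simp
qed

lemma Lipschitz_gradient_norm_sq_le:
  fixes h :: "'v::euclidean_space \<Rightarrow> real" and G :: "'v \<Rightarrow> 'v"
  assumes deriv: "\<And>x. (h has_derivative (\<lambda>d. G x \<bullet> d)) (at x)"
    and lip: "\<And>x y. norm (G x - G y) \<le> L * norm (x - y)"
    and "L > 0" and lower: "\<And>x. hb \<le> h x"
  shows "(norm (G x))\<^sup>2 \<le> 2 * L * (h x - hb)"
proof -
  \<comment> \<open>a gradient step of length 1/L decreases h by at least norm (G x)^2 / (2 L)\<close>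
  define y where "y = x - (1/L) *\<^sub>R G x"
  have "h y \<le> h x + G x \<bullet> (y - x) + L / 2 * (norm (y - x))\<^sup>2"
    by (rule Lipschitz_gradient_upper_bound[OF deriv lip])
  also have "\<dots> = h x - (norm (G x))\<^sup>2 / (2 * L)"
    using \<open>L > 0\<close> by (simp add: y_def dot_square_norm power2_eq_square field_simps)
  finally have "(norm (G x))\<^sup>2 \<le> 2 * L * (h x - h y)" using \<open>L > 0\<close> by (simp add: field_simps)
  also have "\<dots> \<le> 2 * L * (h x - hb)" using lower[of y] \<open>L > 0\<close> by simp
  finally show ?thesis .
qed

lemma gradient_step_bound:
  fixes d r :: "'v::real_inner"
  assumes "0 \<le> t" and "L * t \<le> 1"
  shows "d \<bullet> (- t *\<^sub>R (d + r)) + L / 2 * (norm (- t *\<^sub>R (d + r)))\<^sup>2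
           \<le> - (t / 2) * (norm d)\<^sup>2 + t / 2 * (norm r)\<^sup>2"
proof -
  define N where "N = (norm (d + r))\<^sup>2"
  have "L / 2 * t\<^sup>2 * N \<le> t / 2 * N"
    using mult_right_mono[OF \<open>L * t \<le> 1\<close>, of "t / 2 * N"] \<open>0 \<le> t\<close>
    by (simp add: N_def power2_eq_square algebra_simps)
  moreover have "d \<bullet> (- t *\<^sub>R (d + r)) = - (t / 2) * (norm d)\<^sup>2 + t / 2 * (norm r)\<^sup>2 - t / 2 * N"
    unfolding N_def power2_norm_eq_inner by (simp add: algebra_simps inner_commute)
  ultimately show ?thesis by (simp add: N_def power_mult_distrib)
qed

lemma linear_recursion_le:
  fixes e a :: "nat \<Rightarrow> real"
  assumes "0 \<le> \<mu>" "\<mu> \<le> 1" "0 \<le> c" "\<And>l. 0 \<le> a l"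
    and rec: "\<And>l. l < N \<Longrightarrow> e (Suc l) \<le> \<mu> * e l + c * a l"
    and "l \<le> N"
  shows "e l \<le> \<mu> ^ l * e 0 + c * (\<Sum>k<l. a k)"
  using \<open>l \<le> N\<close>
proof (induction l)
  case (Suc l)
  have "0 \<le> c * (\<Sum>k<l. a k)" using assms by (simp add: sum_nonneg)
  then have "\<mu> * (c * (\<Sum>k<l. a k)) \<le> c * (\<Sum>k<l. a k)"
    using \<open>0 \<le> \<mu>\<close> \<open>\<mu> \<le> 1\<close> by (simp add: mult_left_le_one_le)
  moreover have "\<mu> * e l \<le> \<mu> * (\<mu> ^ l * e 0 + c * (\<Sum>k<l. a k))"
    using Suc by (intro mult_left_mono) (simp_all add: \<open>0 \<le> \<mu>\<close>)
  ultimately show ?case using rec[of l] Suc.prems by (simp add: algebra_simps)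
qed simp

lemma sum_le_linear_recursion:
  fixes e v a :: "nat \<Rightarrow> real"
  assumes "0 \<le> \<mu>" "\<mu> \<le> 1" "0 \<le> c" "\<And>l. 0 \<le> a l"
    and rec: "\<And>l. l < m \<Longrightarrow> e (Suc l) \<le> \<mu> * e l + c * a l"
    and v: "\<And>l. l < m \<Longrightarrow> v l \<le> e l + 2 * \<beta> * real l * (\<Sum>k<l. a k)"
    and "0 \<le> \<beta>"
  shows "(\<Sum>l<m. v l) \<le> (\<Sum>l<m. \<mu> ^ l) * e 0 + (c * real m + \<beta> * (real m)\<^sup>2) * (\<Sum>k<m. a k)"
proof -
  define P where "P = (\<Sum>k<m. a k)"
  have partial_le: "(\<Sum>k<l. a k) \<le> P" if "l \<le> m" for l
    unfolding P_def using that by (intro sum_mono2) (auto simp: assms(4))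
  have "v l \<le> \<mu> ^ l * e 0 + c * P + 2 * \<beta> * P * real l" if "l < m" for l
  proof -
    have "v l \<le> \<mu> ^ l * e 0 + c * (\<Sum>k<l. a k) + 2 * \<beta> * real l * (\<Sum>k<l. a k)"
      using v[OF that] linear_recursion_le[of \<mu> c a m e l, OF assms(1-4) rec] that by simp
    also have "\<dots> \<le> \<mu> ^ l * e 0 + c * P + 2 * \<beta> * real l * P"
      using partial_le[of l] that assms by (intro add_mono mult_left_mono) simp_all
    finally show ?thesis by (simp add: algebra_simps)
  qed
  then have "(\<Sum>l<m. v l) \<le> (\<Sum>l<m. \<mu> ^ l * e 0 + c * P + 2 * \<beta> * P * real l)"
    by (intro sum_mono) simp
  also have "\<dots> = (\<Sum>l<m. \<mu> ^ l) * e 0 + c * real m * P + \<beta> * P * (2 * (\<Sum>l<m. real l))"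
    by (simp add: sum.distrib sum_distrib_left sum_distrib_right algebra_simps)
  also have "\<dots> \<le> (\<Sum>l<m. \<mu> ^ l) * e 0 + c * real m * P + \<beta> * P * (real m)\<^sup>2"
  proof -
    have "2 * (\<Sum>l<m. real l) \<le> (real m)\<^sup>2"
      by (induction m) (simp_all add: power2_eq_square algebra_simps)
    then show ?thesis
      using \<open>0 \<le> \<beta>\<close> partial_le[of m] by (intro add_left_mono mult_left_mono) (simp_all add: P_def sum_nonneg assms(4))
  qed
  finally show ?thesis unfolding P_def by (simp add: algebra_simps)
qed

section \<open>Gossip averaging\<close>

lemma power2_norm_eq_sum_Basis:
  "(norm (x::'a::euclidean_space))\<^sup>2 = (\<Sum>b\<in>Basis. (x \<bullet> b)\<^sup>2)"
  unfolding power2_norm_eq_inner by (simp add: euclidean_inner[of x x] power2_eq_square)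

lemma power2_norm_vec_eq_sum: "(norm (v::real^'n))\<^sup>2 = (\<Sum>i\<in>UNIV. (v$i)\<^sup>2)"
  unfolding power2_norm_eq_inner by (simp add: inner_vec_def power2_eq_square)

text \<open>Applying M row-wise to a family of vectors is applying M coordinatewise, so the
  operator norm of M bounds the Frobenius norm.\<close>
lemma sum_power2_norm_matrix_mix_le:
  fixes M :: "real^'n^'n" and y :: "'n \<Rightarrow> 'v::euclidean_space"
  shows "(\<Sum>i\<in>UNIV. (norm (\<Sum>j\<in>UNIV. M$i$j *\<^sub>R y j))\<^sup>2)
         \<le> (onorm (\<lambda>v. M *v v))\<^sup>2 * (\<Sum>j\<in>UNIV. (norm (y j))\<^sup>2)"
proof -
  define r where "r = onorm (\<lambda>v. M *v v)"
  define \<eta> where "\<eta> b = (\<chi> j. y j \<bullet> b)" for b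
  have bl: "bounded_linear (\<lambda>v. M *v v)" by simp
  have coord: "(\<Sum>j\<in>UNIV. M$i$j *\<^sub>R y j) \<bullet> b = (M *v \<eta> b)$i" for i b
    by (simp add: inner_sum_left matrix_vector_mult_def \<eta>_def)
  have "(\<Sum>i\<in>UNIV. (norm (\<Sum>j\<in>UNIV. M$i$j *\<^sub>R y j))\<^sup>2) = (\<Sum>b\<in>Basis. (norm (M *v \<eta> b))\<^sup>2)"
    by (simp only: power2_norm_eq_sum_Basis[of "\<Sum>j\<in>UNIV. M$i$j *\<^sub>R y j" for i] coord
        power2_norm_vec_eq_sum) (rule sum.swap)
  also have "\<dots> \<le> (\<Sum>b\<in>Basis. r\<^sup>2 * (norm (\<eta> b))\<^sup>2)"
  proof (rule sum_mono)
    fix b :: 'v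
    have "norm (M *v \<eta> b) \<le> r * norm (\<eta> b)" unfolding r_def using onorm[OF bl] .
    then show "(norm (M *v \<eta> b))\<^sup>2 \<le> r\<^sup>2 * (norm (\<eta> b))\<^sup>2"
      by (metis norm_ge_zero power_mono power_mult_distrib)
  qed
  also have "\<dots> = r\<^sup>2 * (\<Sum>j\<in>UNIV. (norm (y j))\<^sup>2)"
    by (simp only: sum_distrib_left[symmetric] power2_norm_vec_eq_sum \<eta>_def vec_lambda_beta
        power2_norm_eq_sum_Basis[of "y j" for j]) (simp add: sum.swap[of _ Basis])
  finally show ?thesis unfolding r_def .
qed

lemma gossip_ok_row_sum: "gossip_ok W \<Longrightarrow> (\<Sum>j\<in>UNIV. W$i$j) = 1"
  unfolding gossip_ok_def by blast

lemma gossip_ok_col_sum: "gossip_ok W \<Longrightarrow> (\<Sum>i\<in>UNIV. W$i$j) = 1"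
  unfolding gossip_ok_def by (metis (no_types, lifting) sum.cong)

lemma avg_pt_mix:
  fixes z :: "'n::finite \<Rightarrow> 'v::real_vector"
  assumes "gossip_ok W"
  shows "avg_pt (\<lambda>i. \<Sum>j\<in>UNIV. W$i$j *\<^sub>R z j) = avg_pt z"
proof -
  have "(\<Sum>i\<in>UNIV. \<Sum>j\<in>UNIV. W$i$j *\<^sub>R z j) = (\<Sum>j\<in>UNIV. (\<Sum>i\<in>UNIV. W$i$j) *\<^sub>R z j)"
    by (subst sum.swap) (simp add: scaleR_sum_left)
  then show ?thesis
    unfolding avg_pt_def using gossip_ok_col_sum[OF assms] by simp
qed

text \<open>Since W - (1/n) 1 1^T has zero row sums, the reference point c is arbitrary.\<close>
lemma consensus_err_mix_le:
  fixes z :: "'n::finite \<Rightarrow> 'v::euclidean_space"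
  assumes W: "gossip_ok W"
  shows "consensus_err (\<lambda>i. \<Sum>j\<in>UNIV. W$i$j *\<^sub>R z j)
           \<le> (rho_w W)\<^sup>2 * (\<Sum>j\<in>UNIV. (norm (z j - c))\<^sup>2)"
proof -
  define n where "n = real CARD('n)"
  define M :: "real^'n^'n" where "M = W - (\<chi> i j. 1 / n)"
  have M: "M$i$j = W$i$j - 1/n" for i j unfolding M_def by simp
  have M_row_sum: "(\<Sum>j\<in>UNIV. M$i$j) = 0" for i
    unfolding M sum_subtractf gossip_ok_row_sum[OF W] by (simp add: n_def)
  have dev: "(\<Sum>j\<in>UNIV. W$i$j *\<^sub>R z j) - avg_pt z = (\<Sum>j\<in>UNIV. M$i$j *\<^sub>R (z j - c))" for i
  proof -
    have "(\<Sum>j\<in>UNIV. M$i$j *\<^sub>R (z j - c)) = (\<Sum>j\<in>UNIV. M$i$j *\<^sub>R z j)"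
      using M_row_sum[of i] by (simp add: scaleR_diff_right sum_subtractf scaleR_sum_left[symmetric])
    also have "\<dots> = (\<Sum>j\<in>UNIV. W$i$j *\<^sub>R z j) - avg_pt z"
      by (simp add: M scaleR_diff_left sum_subtractf scaleR_sum_right avg_pt_def n_def)
    finally show ?thesis ..
  qed
  have "consensus_err (\<lambda>i. \<Sum>j\<in>UNIV. W$i$j *\<^sub>R z j)
      = (\<Sum>i\<in>UNIV. (norm (\<Sum>j\<in>UNIV. M$i$j *\<^sub>R (z j - c)))\<^sup>2)"
    unfolding consensus_err_def avg_pt_mix[OF W] dev ..
  also have "\<dots> \<le> (onorm (\<lambda>v. M *v v))\<^sup>2 * (\<Sum>j\<in>UNIV. (norm (z j - c))\<^sup>2)"
    by (rule sum_power2_norm_matrix_mix_le)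
  finally show ?thesis unfolding rho_w_def M_def n_def .
qed

lemma drr_step_eq_mix:
  "drr_step W g \<alpha> s x = (\<lambda>i. \<Sum>j\<in>UNIV. W$i$j *\<^sub>R (x j - \<alpha> *\<^sub>R g j (s j) (x j)))"
  by (simp add: drr_step_def)

lemma avg_pt_drr_step:
  fixes x :: "'n::finite \<Rightarrow> 'v::real_normed_vector"
  assumes "gossip_ok W"
  shows "avg_pt (drr_step W g \<alpha> s x)
           = avg_pt x - (\<alpha> / real CARD('n)) *\<^sub>R (\<Sum>j\<in>UNIV. g j (s j) (x j))"
  unfolding drr_step_eq_mix avg_pt_mix[OF assms]
  by (simp add: avg_pt_def sum_subtractf scaleR_sum_right[symmetric] scaleR_diff_right)

lemma consensus_err_drr_step_le:
  fixes x :: "'n::finite \<Rightarrow> 'v::euclidean_space"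
  assumes "gossip_ok W"
  shows "consensus_err (drr_step W g \<alpha> s x)
     \<le> (rho_w W)\<^sup>2 * (\<Sum>j\<in>UNIV. (norm ((x j - avg_pt x) - \<alpha> *\<^sub>R g j (s j) (x j)))\<^sup>2)"
  using consensus_err_mix_le[OF assms, of "\<lambda>j. x j - \<alpha> *\<^sub>R g j (s j) (x j)" "avg_pt x"]
  by (simp add: drr_step_eq_mix algebra_simps)

lemma sum_power2_norm_diff_eq:
  fixes x :: "'n::finite \<Rightarrow> 'v::real_inner"
  shows "(\<Sum>j\<in>UNIV. (norm (x j - c))\<^sup>2) = consensus_err x + real CARD('n) * (norm (avg_pt x - c))\<^sup>2"
proof -
  define xb where "xb = avg_pt x"
  have sum_dev: "(\<Sum>j\<in>UNIV. x j - xb) = 0"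
    by (simp add: xb_def avg_pt_def sum_subtractf sum_constant_scaleR)
  have "(norm (x j - c))\<^sup>2 = (norm (x j - xb))\<^sup>2 + 2 * ((x j - xb) \<bullet> (xb - c)) + (norm (xb - c))\<^sup>2" for j
    unfolding power2_norm_eq_inner by (simp add: algebra_simps inner_commute)
  then have "(\<Sum>j\<in>UNIV. (norm (x j - c))\<^sup>2)
      = consensus_err x + 2 * ((\<Sum>j\<in>UNIV. x j - xb) \<bullet> (xb - c)) + real CARD('n) * (norm (xb - c))\<^sup>2"
    by (simp add: sum.distrib inner_sum_left sum_distrib_left consensus_err_def xb_def)
  also have "\<dots> = consensus_err x + real CARD('n) * (norm (xb - c))\<^sup>2"
    by (simp only: sum_dev inner_zero_left mult_zero_right add_0_right)
  finally show ?thesis unfolding xb_def .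
qed

section \<open>The global objective\<close>

lemma global_f_eq:
  "global_f m f x = (1 / (real m * real CARD('n))) * (\<Sum>i\<in>UNIV. \<Sum>l<m. f (i::'n::finite) l x)"
  unfolding global_f_def by (simp add: sum_divide_distrib[symmetric])

lemma global_grad_eq:
  "global_grad m g x = (1 / (real m * real CARD('n))) *\<^sub>R (\<Sum>i\<in>UNIV. \<Sum>l<m. g (i::'n::finite) l x)"
  unfolding global_grad_def by (simp add: scaleR_sum_right mult.commute)

lemma has_derivative_global_f:
  fixes f :: "'n::finite \<Rightarrow> nat \<Rightarrow> 'v::euclidean_space \<Rightarrow> real"
  assumes "\<And>i l x. l < m \<Longrightarrow> (f i l has_derivative (\<lambda>h. g i l x \<bullet> h)) (at x)"
  shows "(global_f m f has_derivative (\<lambda>d. global_grad m g x \<bullet> d)) (at x)"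
proof -
  have "((\<lambda>x. (1 / (real m * real CARD('n))) * (\<Sum>i\<in>UNIV. \<Sum>l<m. f i l x)) has_derivative
        (\<lambda>d. (1 / (real m * real CARD('n))) * (\<Sum>i\<in>UNIV. \<Sum>l<m. g i l x \<bullet> d))) (at x)"
    by (intro has_derivative_mult_right has_derivative_sum) (auto intro: assms)
  then show ?thesis
    by (simp add: global_f_eq[abs_def] global_grad_eq inner_sum_left)
qed

lemma global_grad_Lipschitz:
  fixes g :: "'n::finite \<Rightarrow> nat \<Rightarrow> 'v::real_normed_vector \<Rightarrow> 'v"
  assumes "m \<ge> 1" and lip: "\<And>i l x y. l < m \<Longrightarrow> norm (g i l x - g i l y) \<le> L * norm (x - y)"
  shows "norm (global_grad m g x - global_grad m g y) \<le> L * norm (x - y)"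
proof -
  have "norm (\<Sum>i\<in>UNIV. \<Sum>l<m. g i l x - g i l y) \<le> (\<Sum>i::'n\<in>UNIV. \<Sum>l<m. L * norm (x - y))"
    by (rule order_trans[OF norm_sum sum_mono], rule order_trans[OF norm_sum sum_mono])
      (simp add: lip)
  then have "norm (\<Sum>i\<in>UNIV. \<Sum>l<m. g i l x - g i l y) \<le> real m * real CARD('n) * (L * norm (x - y))"
    by (simp add: mult_ac)
  then show ?thesis
    using \<open>m \<ge> 1\<close> by (simp add: global_grad_eq sum_subtractf[symmetric] scaleR_diff_right[symmetric]
        field_simps)
qed

lemma global_f_ge:
  fixes f :: "'n::finite \<Rightarrow> nat \<Rightarrow> 'v \<Rightarrow> real"
  assumes "\<And>i l x. l < m \<Longrightarrow> f i l x \<ge> fb i l"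
  shows "(1 / (real m * real CARD('n))) * (\<Sum>i\<in>UNIV. \<Sum>l<m. fb i l) \<le> global_f m f x"
  unfolding global_f_eq by (rule mult_left_mono) (auto intro!: sum_mono assms)

lemma INF_global_f_le:
  fixes f :: "'n::finite \<Rightarrow> nat \<Rightarrow> 'v \<Rightarrow> real"
  assumes "\<And>i l x. l < m \<Longrightarrow> f i l x \<ge> fb i l"
  shows "(INF z. global_f m f z) \<le> global_f m f x"
proof -
  have "bdd_below (range (global_f m f))"
    using global_f_ge[where f = f and fb = fb and m = m] assms unfolding bdd_below_def by blast
  then show ?thesis by (rule cINF_lower) simp
qed

lemma INF_global_f_ge:
  fixes f :: "'n::finite \<Rightarrow> nat \<Rightarrow> 'v \<Rightarrow> real"
  assumes "\<And>i l x. l < m \<Longrightarrow> f i l x \<ge> fb i l"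
  shows "(1 / (real m * real CARD('n))) * (\<Sum>i\<in>UNIV. \<Sum>l<m. fb i l) \<le> (INF z. global_f m f z)"
  using global_f_ge[OF assms] by (intro cINF_greatest) auto

lemma sum_reindex_perms:
  fixes h :: "'n::finite \<Rightarrow> nat \<Rightarrow> 'a::comm_monoid_add"
  assumes "\<And>j. bij_betw (p j) {..<m} {..<m}"
  shows "(\<Sum>k<m. \<Sum>j\<in>UNIV. h j (p j k)) = (\<Sum>j\<in>UNIV. \<Sum>k<m. h j k)"
  by (subst sum.swap) (simp add: sum.reindex_bij_betw[OF assms])

lemma sum_permuted_grads:
  fixes g :: "'n::finite \<Rightarrow> nat \<Rightarrow> 'v::real_vector \<Rightarrow> 'v"
  assumes "\<And>j. bij_betw (p j) {..<m} {..<m}" and "m \<ge> 1"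
  shows "(\<Sum>k<m. \<Sum>j\<in>UNIV. g j (p j k) x) = (real CARD('n) * real m) *\<^sub>R global_grad m g x"
  using sum_reindex_perms[OF assms(1), of "\<lambda>j k. g j k x"] assms(2) by (simp add: global_grad_eq)

lemma sum_power2_norm_permuted_grads_le:
  fixes f :: "'n::finite \<Rightarrow> nat \<Rightarrow> 'v::euclidean_space \<Rightarrow> real"
  assumes grad: "\<And>i l x. l < m \<Longrightarrow> (f i l has_derivative (\<lambda>h. g i l x \<bullet> h)) (at x)"
    and lip: "\<And>i l x y. l < m \<Longrightarrow> norm (g i l x - g i l y) \<le> L * norm (x - y)"
    and lower: "\<And>i l x. l < m \<Longrightarrow> f i l x \<ge> fb i l"
    and perms: "\<And>j. bij_betw (p j) {..<m} {..<m}"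
    and "L > 0" and "m \<ge> 1"
  shows "(\<Sum>k<m. \<Sum>j\<in>UNIV. (norm (g j (p j k) x))\<^sup>2)
     \<le> real CARD('n) * real m * (2 * L * (global_f m f x - (INF z. global_f m f z))
          + 2 * L * ((INF z. global_f m f z) - (1 / (real m * real CARD('n))) * (\<Sum>i\<in>UNIV. \<Sum>l<m. fb i l)))"
proof -
  have "(\<Sum>k<m. \<Sum>j\<in>UNIV. (norm (g j (p j k) x))\<^sup>2) = (\<Sum>j\<in>UNIV. \<Sum>k<m. (norm (g j k x))\<^sup>2)"
    by (rule sum_reindex_perms[OF perms])
  also have "\<dots> \<le> (\<Sum>j\<in>UNIV. \<Sum>k<m. 2 * L * (f j k x - fb j k))"
    by (intro sum_mono Lipschitz_gradient_norm_sq_le[OF grad lip \<open>L > 0\<close> lower]) auto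
  also have "\<dots> = 2 * L * ((\<Sum>j\<in>UNIV. \<Sum>k<m. f j k x) - (\<Sum>j\<in>UNIV. \<Sum>k<m. fb j k))"
    by (simp add: sum_subtractf sum_distrib_left right_diff_distrib)
  also have "\<dots> = real CARD('n) * real m * (2 * L * (global_f m f x
      - (1 / (real m * real CARD('n))) * (\<Sum>i\<in>UNIV. \<Sum>l<m. fb i l)))"
    using \<open>m \<ge> 1\<close> by (simp add: global_f_eq field_simps)
  finally show ?thesis by (simp add: algebra_simps)
qed

section \<open>Step-size arithmetic\<close>

lemma step_size_consequences:
  fixes \<alpha> L q :: real and m :: nat
  assumes "0 < \<alpha>" and "0 \<le> L"
    and \<alpha>_le: "\<alpha> \<le> min (q / (4 * sqrt 3 * L * (real m + 2))) (q powr (3/2) / (16 * sqrt 6 * L))"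
  shows "0 < L" and "0 < q"
    and "\<alpha>\<^sup>2 * L\<^sup>2 \<le> q\<^sup>2 / (48 * (real m + 2)\<^sup>2)"
    and "\<alpha>\<^sup>2 * L\<^sup>2 \<le> q ^ 3 / 1536"
proof -
  show "0 < L"
    using assms by (cases "L = 0") auto
  show "0 < q"
  proof (rule ccontr)
    assume "\<not> 0 < q"
    then have "q / (4 * sqrt 3 * L * (real m + 2)) \<le> 0"
      using \<open>0 < L\<close> by (simp add: divide_nonpos_pos)
    then show False using assms by simp
  qed
  have "\<alpha> * L \<le> q / (4 * sqrt 3 * L * (real m + 2)) * L"
    using \<alpha>_le \<open>0 < L\<close> by (intro mult_right_mono) simp_all
  then have "\<alpha> * L \<le> q / (4 * sqrt 3 * (real m + 2))"
    using \<open>0 < L\<close> by simp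
  then have "(\<alpha> * L)\<^sup>2 \<le> (q / (4 * sqrt 3 * (real m + 2)))\<^sup>2"
    using assms by (intro power_mono) simp_all
  then show "\<alpha>\<^sup>2 * L\<^sup>2 \<le> q\<^sup>2 / (48 * (real m + 2)\<^sup>2)"
    by (simp add: power_mult_distrib power_divide)
  have "\<alpha> * L \<le> q powr (3/2) / (16 * sqrt 6 * L) * L"
    using \<alpha>_le \<open>0 < L\<close> by (intro mult_right_mono) simp_all
  then have "\<alpha> * L \<le> q powr (3/2) / (16 * sqrt 6)"
    using \<open>0 < L\<close> by simp
  then have "(\<alpha> * L)\<^sup>2 \<le> (q powr (3/2) / (16 * sqrt 6))\<^sup>2"
    using assms by (intro power_mono) simp_all
  also have "(q powr (3/2))\<^sup>2 = q ^ 3"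
    using \<open>0 < q\<close> by (simp add: power2_eq_square powr_add[symmetric] powr_realpow)
  then have "(q powr (3/2) / (16 * sqrt 6))\<^sup>2 = q ^ 3 / 1536"
    by (simp add: power_divide power_mult_distrib)
  finally show "\<alpha>\<^sup>2 * L\<^sup>2 \<le> q ^ 3 / 1536"
    by (simp add: power_mult_distrib)
qed

lemma step_size_theta_le:
  fixes \<alpha> L q m :: real
  assumes "0 < q" "q \<le> 1" "1 \<le> m" and \<alpha>L: "\<alpha>\<^sup>2 * L\<^sup>2 \<le> q\<^sup>2 / (48 * (m + 2)\<^sup>2)"
  shows "L\<^sup>2 * (4 * \<alpha>\<^sup>2 / q * m + \<alpha>\<^sup>2 * m\<^sup>2) \<le> 1 / 48"
proof -
  have expand: "q\<^sup>2 * (4 * m / q + m\<^sup>2) = 4 * m * q + m\<^sup>2 * q\<^sup>2"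
    using \<open>0 < q\<close> by (simp add: field_simps power2_eq_square)
  have "L\<^sup>2 * (4 * \<alpha>\<^sup>2 / q * m + \<alpha>\<^sup>2 * m\<^sup>2) = \<alpha>\<^sup>2 * L\<^sup>2 * (4 * m / q + m\<^sup>2)"
    by (simp add: algebra_simps)
  also have "\<dots> \<le> q\<^sup>2 / (48 * (m + 2)\<^sup>2) * (4 * m / q + m\<^sup>2)"
    using assms by (intro mult_right_mono) simp_all
  also have "\<dots> = (4 * m * q + m\<^sup>2 * q\<^sup>2) / (48 * (m + 2)\<^sup>2)"
    unfolding expand[symmetric] by simp
  also have "\<dots> \<le> (4 * m + m\<^sup>2) / (48 * (m + 2)\<^sup>2)"
    using assms by (intro divide_right_mono add_mono mult_left_mono) (simp_all add: power_le_one)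
  also have "\<dots> \<le> 1 / 48"
  proof -
    have "4 * m + m\<^sup>2 \<le> (m + 2)\<^sup>2" by (simp add: power2_eq_square algebra_simps)
    moreover have "0 < (m + 2)\<^sup>2" using assms by simp
    ultimately show ?thesis by (simp add: divide_le_eq)
  qed
  finally show ?thesis .
qed

lemma step_size_Lipschitz_le:
  fixes \<alpha> L q m :: real
  assumes "0 < q" "0 \<le> m" and theta: "L\<^sup>2 * (4 * \<alpha>\<^sup>2 / q * m + \<alpha>\<^sup>2 * m\<^sup>2) \<le> 1 / 48"
  shows "L * m * \<alpha> \<le> 1"
proof -
  have "(L * m * \<alpha>)\<^sup>2 = L\<^sup>2 * (\<alpha>\<^sup>2 * m\<^sup>2)"
    by (simp add: power_mult_distrib)
  also have "\<dots> \<le> L\<^sup>2 * (4 * \<alpha>\<^sup>2 / q * m + \<alpha>\<^sup>2 * m\<^sup>2)"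
    using assms by (intro mult_left_mono) simp_all
  finally have "(L * m * \<alpha>)\<^sup>2 \<le> 1 / 48" using theta by (rule order_trans)
  then have "(L * m * \<alpha>)\<^sup>2 \<le> 1\<^sup>2" by simp
  then show ?thesis by (rule power2_le_imp_le) simp
qed

text \<open>The weight of the gradient budget in the Lyapunov recursion: the first summand
  comes from the descent step, the second from the consensus error.\<close>
definition budget_weight :: "real \<Rightarrow> real \<Rightarrow> real \<Rightarrow> real \<Rightarrow> real \<Rightarrow> real" where
  "budget_weight q L \<alpha> n m =
     \<alpha> * (L\<^sup>2 * (4 * \<alpha>\<^sup>2 / q * m + \<alpha>\<^sup>2 * m\<^sup>2)) / (2 * n) + 64 * \<alpha>^3 * L\<^sup>2 / (n * q^3)"

lemma budget_weight_nonneg: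
  "0 < q \<Longrightarrow> 0 \<le> \<alpha> \<Longrightarrow> 0 \<le> n \<Longrightarrow> 0 \<le> m \<Longrightarrow> 0 \<le> budget_weight q L \<alpha> n m"
  unfolding budget_weight_def by simp

lemma budget_weight_le:
  fixes q L \<alpha> n m :: real
  assumes "0 < q" "q \<le> 1" "0 < \<alpha>" "1 \<le> n"
    and theta: "L\<^sup>2 * (4 * \<alpha>\<^sup>2 / q * m + \<alpha>\<^sup>2 * m\<^sup>2) \<le> 1 / 48"
    and cross: "\<alpha>\<^sup>2 * L\<^sup>2 \<le> q ^ 3 / 1536"
  shows "\<alpha> * L\<^sup>2 / (2 * n) + 48 / 47 * budget_weight q L \<alpha> n m * L\<^sup>2 \<le> 8 * \<alpha> * L\<^sup>2 / (n * q)"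
proof -
  have "64 * \<alpha>^3 * L\<^sup>2 / (n * q^3) = 64 * \<alpha> * (\<alpha>\<^sup>2 * L\<^sup>2) / (n * q^3)"
    by (simp add: power2_eq_square power3_eq_cube)
  also have "\<dots> \<le> 64 * \<alpha> * (q ^ 3 / 1536) / (n * q ^ 3)"
    using assms by (intro divide_right_mono mult_left_mono cross) simp_all
  also have "\<dots> = \<alpha> / (24 * n)"
    using assms by (simp add: field_simps)
  finally have "64 * \<alpha>^3 * L\<^sup>2 / (n * q^3) \<le> \<alpha> / (24 * n)" .
  moreover have "\<alpha> * (L\<^sup>2 * (4 * \<alpha>\<^sup>2 / q * m + \<alpha>\<^sup>2 * m\<^sup>2)) / (2 * n) \<le> \<alpha> * (1 / 48) / (2 * n)"
    using assms by (intro divide_right_mono mult_left_mono) simp_all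
  ultimately have "48 / 47 * budget_weight q L \<alpha> n m * L\<^sup>2 \<le> 48 / 47 * (\<alpha> / (96 * n) + \<alpha> / (24 * n)) * L\<^sup>2"
    unfolding budget_weight_def by (intro mult_right_mono mult_left_mono) simp_all
  then have "\<alpha> * L\<^sup>2 / (2 * n) + 48 / 47 * budget_weight q L \<alpha> n m * L\<^sup>2 \<le> (1 / 2 + 5 / 94) * (\<alpha> * L\<^sup>2 / n)"
    by (simp add: algebra_simps)
  also have "\<dots> \<le> 8 * (\<alpha> * L\<^sup>2 / n)"
    using assms by (intro mult_right_mono) simp_all
  also have "\<dots> \<le> 8 * (\<alpha> * L\<^sup>2 / n) / q"
    using assms by (simp add: le_divide_eq mult_left_le)
  finally show ?thesis by simp
qed

lemma scaled_budget_weight_le: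
  fixes q L \<alpha> n m :: real
  assumes "0 < q" "q \<le> 1" "0 < \<alpha>" "0 < n" "1 \<le> m"
  shows "48 / 47 * (n * m * budget_weight q L \<alpha> n m)
           \<le> \<alpha>^3 * L\<^sup>2 * m\<^sup>2 * (4 + m) / q + 66 * (\<alpha>^3 * L\<^sup>2 * m / q^3)"
proof -
  have "m \<le> m / q" using assms by (simp add: le_divide_eq mult_left_le)
  then have "4 / q + m \<le> (4 + m) / q" by (simp add: add_divide_distrib)
  then have "\<alpha>^3 * L\<^sup>2 * m\<^sup>2 * (4 / q + m) \<le> \<alpha>^3 * L\<^sup>2 * m\<^sup>2 * ((4 + m) / q)"
    using assms by (intro mult_left_mono) simp_all
  then have le: "\<alpha>^3 * L\<^sup>2 * m\<^sup>2 * (4 / q + m) \<le> \<alpha>^3 * L\<^sup>2 * m\<^sup>2 * (4 + m) / q" by simp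
  have "48 / 47 * (n * m * budget_weight q L \<alpha> n m)
      = 48 / 47 * (\<alpha>^3 * L\<^sup>2 * m\<^sup>2 * (4 / q + m) / 2 + 64 * (\<alpha>^3 * L\<^sup>2 * m / q^3))"
    using assms by (simp add: budget_weight_def field_simps power2_eq_square power3_eq_cube)
  also have "\<dots> = 24 / 47 * (\<alpha>^3 * L\<^sup>2 * m\<^sup>2 * (4 / q + m)) + 3072 / 47 * (\<alpha>^3 * L\<^sup>2 * m / q^3)"
    by (simp only: distrib_left mult.assoc[symmetric] times_divide_eq_right) simp
  also have "\<dots> \<le> \<alpha>^3 * L\<^sup>2 * m\<^sup>2 * (4 + m) / q + 66 * (\<alpha>^3 * L\<^sup>2 * m / q^3)"
  proof (rule add_mono)
    have "0 \<le> \<alpha>^3 * L\<^sup>2 * m\<^sup>2 * (4 / q + m)" using assms by simp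
    then show "24 / 47 * (\<alpha>^3 * L\<^sup>2 * m\<^sup>2 * (4 / q + m)) \<le> \<alpha>^3 * L\<^sup>2 * m\<^sup>2 * (4 + m) / q"
      using le by linarith
    show "3072 / 47 * (\<alpha>^3 * L\<^sup>2 * m / q^3) \<le> 66 * (\<alpha>^3 * L\<^sup>2 * m / q^3)"
      using assms by (intro mult_right_mono) simp_all
  qed
  finally show ?thesis .
qed

lemma budget_gain_bounds:
  fixes q L \<alpha> m B :: real
  assumes "0 < q" "q \<le> 1" "0 < \<alpha>" "0 \<le> L" "1 \<le> m" "0 \<le> B"
  defines "R \<equiv> \<alpha>^3 * L\<^sup>2 * m\<^sup>2 * (4 + m) / q + 66 * (\<alpha>^3 * L\<^sup>2 * m / q^3)"
  shows "R * (2 * L) \<le> 12 * m\<^sup>2 * \<alpha>^3 * L\<^sup>2 * (2 * L) * (4 + m) / q + 384 * (2 * L) * \<alpha>^3 * L\<^sup>2 * m / q^3"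
    and "R * B \<le> 6 * m * \<alpha>^3 * L\<^sup>2 * B * (m * (m + 4) + 32) / q^3"
proof -
  define U1 where "U1 = \<alpha>^3 * L\<^sup>2 * m\<^sup>2 * (4 + m) / q"
  define U2 where "U2 = \<alpha>^3 * L\<^sup>2 * m / q^3"
  define U3 where "U3 = \<alpha>^3 * L\<^sup>2 * m\<^sup>2 * (4 + m) / q^3"
  have U: "0 \<le> U1" "0 \<le> U2" "U1 \<le> U3"
    using assms power_decreasing[of 1 3 q] unfolding U1_def U2_def U3_def
    by (simp_all add: divide_left_mono)
  have R: "R = U1 + 66 * U2" unfolding R_def U1_def U2_def ..
  have "12 * m\<^sup>2 * \<alpha>^3 * L\<^sup>2 * (2 * L) * (4 + m) / q + 384 * (2 * L) * \<alpha>^3 * L\<^sup>2 * m / q^3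
      = (12 * U1 + 384 * U2) * (2 * L)"
    unfolding U1_def U2_def by (simp add: algebra_simps)
  then show "R * (2 * L) \<le> 12 * m\<^sup>2 * \<alpha>^3 * L\<^sup>2 * (2 * L) * (4 + m) / q + 384 * (2 * L) * \<alpha>^3 * L\<^sup>2 * m / q^3"
    using U \<open>0 \<le> L\<close> unfolding R by (simp add: mult_right_mono)
  have "6 * m * \<alpha>^3 * L\<^sup>2 * B * (m * (m + 4) + 32) / q^3 = (6 * U3 + 192 * U2) * B"
    unfolding U2_def U3_def by (simp add: algebra_simps power2_eq_square add_divide_distrib)
  then show "R * B \<le> 6 * m * \<alpha>^3 * L\<^sup>2 * B * (m * (m + 4) + 32) / q^3"
    using U \<open>0 \<le> B\<close> unfolding R by (simp add: mult_right_mono)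
qed

text \<open>The spread recursion feeds the budget P back into itself with gain at most 1/48;
  what remains of the consensus terms is paid for by the contraction 1 - q/2 of the
  consensus error.\<close>
lemma lyapunov_consensus_absorbed:
  fixes \<Delta> e0 em gn F V S \<Lambda> q L \<alpha> n m :: real
  assumes "0 < q" "q \<le> 1" "0 < \<alpha>" "1 \<le> n" "0 \<le> m" "0 \<le> e0" "0 \<le> \<Lambda>" "0 \<le> S"
    and theta: "L\<^sup>2 * (4 * \<alpha>\<^sup>2 / q * m + \<alpha>\<^sup>2 * m\<^sup>2) \<le> 1 / 48"
    and cross: "\<alpha>\<^sup>2 * L\<^sup>2 \<le> q ^ 3 / 1536"
    and descent: "F \<le> \<Delta> - m * \<alpha> / 2 * gn + \<alpha> * L\<^sup>2 / (2 * n) * V"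
    and cons: "em \<le> (1 - q / 2 * \<Lambda>) * e0 + 4 * \<alpha>\<^sup>2 / q * (L\<^sup>2 * V + S)"
    and spread: "V \<le> \<Lambda> * e0 + (4 * \<alpha>\<^sup>2 / q * m + \<alpha>\<^sup>2 * m\<^sup>2) * (L\<^sup>2 * V + S)"
  shows "F + 16 * \<alpha> * L\<^sup>2 / (n * q\<^sup>2) * em
           \<le> \<Delta> - m * \<alpha> / 2 * gn + 16 * \<alpha> * L\<^sup>2 / (n * q\<^sup>2) * e0 + 48 / 47 * budget_weight q L \<alpha> n m * S"
    (is "_ + ?c * _ \<le> _")
proof -
  define P where "P = L\<^sup>2 * V + S"
  define w where "w = budget_weight q L \<alpha> n m"
  have "0 \<le> ?c" "0 \<le> w" using assms by (simp_all add: w_def budget_weight_nonneg)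
  have "L\<^sup>2 * V \<le> L\<^sup>2 * (\<Lambda> * e0 + (4 * \<alpha>\<^sup>2 / q * m + \<alpha>\<^sup>2 * m\<^sup>2) * P)"
    using spread by (intro mult_left_mono) (simp_all add: P_def)
  then have "P \<le> (L\<^sup>2 * \<Lambda> * e0 + S) + L\<^sup>2 * (4 * \<alpha>\<^sup>2 / q * m + \<alpha>\<^sup>2 * m\<^sup>2) * P"
    by (simp add: P_def algebra_simps)
  then have "P \<le> (L\<^sup>2 * \<Lambda> * e0 + S) / (1 - 1 / 48)"
    using assms by (intro le_divide_one_minus_if_le_add_mult[OF _ _ theta]) simp_all
  then have "w * P \<le> w * ((L\<^sup>2 * \<Lambda> * e0 + S) / (1 - 1 / 48))"
    using \<open>0 \<le> w\<close> by (rule mult_left_mono)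
  also have "\<dots> = 48 / 47 * w * L\<^sup>2 * \<Lambda> * e0 + 48 / 47 * w * S"
    by (simp add: field_simps)
  finally have wP: "w * P \<le> 48 / 47 * w * L\<^sup>2 * \<Lambda> * e0 + 48 / 47 * w * S" .
  define D where "D = (\<alpha> * L\<^sup>2 / (2 * n) - 8 * \<alpha> * L\<^sup>2 / (n * q)) * \<Lambda> * e0"
  have "\<alpha> * L\<^sup>2 / (2 * n) * V + ?c * em
      \<le> \<alpha> * L\<^sup>2 / (2 * n) * (\<Lambda> * e0 + (4 * \<alpha>\<^sup>2 / q * m + \<alpha>\<^sup>2 * m\<^sup>2) * P)
        + ?c * ((1 - q / 2 * \<Lambda>) * e0 + 4 * \<alpha>\<^sup>2 / q * P)"
    using assms mult_left_mono[OF cons \<open>0 \<le> ?c\<close>]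
    by (intro add_mono mult_left_mono) (simp_all add: P_def spread)
  also have "\<dots> = ?c * e0 + (D + w * P)"
    using assms by (simp add: D_def w_def budget_weight_def field_simps power2_eq_square power3_eq_cube)
  finally have "\<alpha> * L\<^sup>2 / (2 * n) * V + ?c * em \<le> ?c * e0 + (D + w * P)" .
  moreover have "D + 48 / 47 * w * L\<^sup>2 * \<Lambda> * e0 \<le> 0"
  proof -
    have "\<alpha> * L\<^sup>2 / (2 * n) - 8 * \<alpha> * L\<^sup>2 / (n * q) + 48 / 47 * w * L\<^sup>2 \<le> 0"
      using budget_weight_le[OF assms(1-4) theta cross] by (simp add: w_def)
    then have "(\<alpha> * L\<^sup>2 / (2 * n) - 8 * \<alpha> * L\<^sup>2 / (n * q) + 48 / 47 * w * L\<^sup>2) * (\<Lambda> * e0) \<le> 0"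
      using assms by (simp add: mult_nonpos_nonneg)
    then show ?thesis by (simp add: D_def algebra_simps)
  qed
  ultimately show ?thesis using descent wP unfolding w_def[symmetric] by linarith
qed

lemma lyapunov_arith:
  fixes \<Delta> B e0 em gn F V S \<Lambda> q L \<alpha> n m :: real
  assumes "0 < q" "q \<le> 1" "0 < L" "0 < \<alpha>" "1 \<le> n" "1 \<le> m"
    and "0 \<le> \<Delta>" "0 \<le> B" "0 \<le> e0" "0 \<le> \<Lambda>" "0 \<le> S" "0 \<le> gn"
    and theta: "L\<^sup>2 * (4 * \<alpha>\<^sup>2 / q * m + \<alpha>\<^sup>2 * m\<^sup>2) \<le> 1 / 48"
    and cross: "\<alpha>\<^sup>2 * L\<^sup>2 \<le> q ^ 3 / 1536"
    and descent: "F \<le> \<Delta> - m * \<alpha> / 2 * gn + \<alpha> * L\<^sup>2 / (2 * n) * V"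
    and cons: "em \<le> (1 - q / 2 * \<Lambda>) * e0 + 4 * \<alpha>\<^sup>2 / q * (L\<^sup>2 * V + S)"
    and spread: "V \<le> \<Lambda> * e0 + (4 * \<alpha>\<^sup>2 / q * m + \<alpha>\<^sup>2 * m\<^sup>2) * (L\<^sup>2 * V + S)"
    and source: "S \<le> n * m * (2 * L * \<Delta> + B)"
  shows "F + 16 * \<alpha> * L\<^sup>2 / (n * q\<^sup>2) * em
     \<le> (1 + 12 * m\<^sup>2 * \<alpha>^3 * L\<^sup>2 * (2 * L) * (4 + m) / q + 384 * (2 * L) * \<alpha>^3 * L\<^sup>2 * m / q^3)
         * (\<Delta> + 16 * \<alpha> * L\<^sup>2 / (n * q\<^sup>2) * e0)
       - m * \<alpha> / 4 * gn + 6 * m * \<alpha>^3 * L\<^sup>2 * B * (m * (m + 4) + 32) / q^3"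
    (is "_ \<le> (1 + ?\<kappa>1 + ?\<kappa>2) * (\<Delta> + ?c * e0) - _ + ?\<beta>")
proof -
  define w where "w = budget_weight q L \<alpha> n m"
  define R where "R = \<alpha>^3 * L\<^sup>2 * m\<^sup>2 * (4 + m) / q + 66 * (\<alpha>^3 * L\<^sup>2 * m / q^3)"
  note gain = budget_gain_bounds[of q \<alpha> L m B, folded R_def, OF assms(1,2,4) _ assms(6,8)]
  have "0 \<le> w" using assms by (simp add: w_def budget_weight_nonneg)
  have "48 / 47 * w * S \<le> 48 / 47 * w * (n * m * (2 * L * \<Delta> + B))"
    using source \<open>0 \<le> w\<close> by (intro mult_left_mono) simp_all
  also have "\<dots> = 48 / 47 * (n * m * w) * (2 * L * \<Delta> + B)" by (simp only: mult_ac)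
  also have "\<dots> \<le> R * (2 * L * \<Delta> + B)"
    using scaled_budget_weight_le[of q \<alpha> n m L] assms
    by (intro mult_right_mono) (simp_all add: w_def R_def)
  also have "\<dots> = R * (2 * L) * \<Delta> + R * B" by (simp only: distrib_left mult.assoc)
  also have "\<dots> \<le> (?\<kappa>1 + ?\<kappa>2) * \<Delta> + ?\<beta>"
    using gain assms by (intro add_mono mult_right_mono) simp_all
  finally have "48 / 47 * w * S \<le> (?\<kappa>1 + ?\<kappa>2) * \<Delta> + ?\<beta>" .
  moreover have "0 \<le> (?\<kappa>1 + ?\<kappa>2) * (?c * e0)" "0 \<le> m * \<alpha> / 4 * gn"
    using assms by simp_all
  moreover have "(1 + ?\<kappa>1 + ?\<kappa>2) * (\<Delta> + ?c * e0)
      = \<Delta> + ?c * e0 + (?\<kappa>1 + ?\<kappa>2) * \<Delta> + (?\<kappa>1 + ?\<kappa>2) * (?c * e0)"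
    by (simp only: distrib_left distrib_right mult_1 add.assoc)
  ultimately show ?thesis
    using lyapunov_consensus_absorbed[OF assms(1,2,4,5) _ assms(9-11) theta cross descent cons spread] assms
    unfolding w_def by linarith
qed

section \<open>One epoch of D-RR\<close>

locale drr_epoch =
  fixes W :: "real^'n::finite^'n"
    and f :: "'n \<Rightarrow> nat \<Rightarrow> 'v::euclidean_space \<Rightarrow> real"
    and g :: "'n \<Rightarrow> nat \<Rightarrow> 'v \<Rightarrow> 'v"
    and m :: nat and L \<alpha> :: real
    and p :: "'n \<Rightarrow> nat \<Rightarrow> nat"
    and X :: "'n \<Rightarrow> 'v"
  assumes m_pos: "m \<ge> 1"
    and W: "gossip_ok W"
    and grad: "\<And>i l x. l < m \<Longrightarrow> (f i l has_derivative (\<lambda>h. g i l x \<bullet> h)) (at x)"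
    and lip: "\<And>i l x y. l < m \<Longrightarrow> norm (g i l x - g i l y) \<le> L * norm (x - y)"
    and perms: "\<And>j. bij_betw (p j) {..<m} {..<m}"
    and alpha_pos: "0 < \<alpha>"
    and rho_lt_1: "rho_w W < 1"
begin

text \<open>In the notation of the paper, iterate l is the matrix x_t^l and x_avg l its
  average; everything is measured against the anchor x_avg 0 at the start of the epoch.\<close>

abbreviation "q \<equiv> 1 - (rho_w W)\<^sup>2"
abbreviation "iterate l \<equiv> drr_inner W g \<alpha> p l X"
abbreviation "x_avg l \<equiv> avg_pt (iterate l)"
abbreviation "grad_at l j \<equiv> g j (p j l) (iterate l j)"
abbreviation "anchor_grad l j \<equiv> g j (p j l) (x_avg 0)"
abbreviation "spread l \<equiv> (\<Sum>j\<in>UNIV. (norm (iterate l j - x_avg 0))\<^sup>2)"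
abbreviation "budget l \<equiv> L\<^sup>2 * spread l + (\<Sum>j\<in>UNIV. (norm (anchor_grad l j))\<^sup>2)"
abbreviation "rate \<equiv> (1 + (rho_w W)\<^sup>2) / 2"
abbreviation "rate_sum \<equiv> (\<Sum>l<m. rate ^ l)"
abbreviation "total_spread \<equiv> (\<Sum>l<m. spread l)"
abbreviation "anchor_budget \<equiv> (\<Sum>l<m. \<Sum>j\<in>UNIV. (norm (anchor_grad l j))\<^sup>2)"

lemma q_pos: "q > 0"
  using rho_lt_1 onorm_pos_le[of "\<lambda>v. (W - (\<chi> i j. 1 / real CARD('n))) *v v"]
  by (simp add: rho_w_def abs_square_less_1)

lemma perm_less: "l < m \<Longrightarrow> p j l < m"
  using bij_betw_apply[OF perms] by blast

lemma budget_nonneg: "budget l \<ge> 0"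
  by (simp add: sum_nonneg)

lemma x_avg_eq: "x_avg l = x_avg 0 - (\<alpha> / real CARD('n)) *\<^sub>R (\<Sum>k<l. \<Sum>j\<in>UNIV. grad_at k j)"
  by (induction l) (simp_all add: avg_pt_drr_step[OF W] algebra_simps)

lemma grad_at_dist_le: "l < m \<Longrightarrow> norm (grad_at l j - anchor_grad l j) \<le> L * norm (iterate l j - x_avg 0)"
  by (rule lip[OF perm_less])

lemma sum_power2_norm_grad_at_le:
  assumes "l < m"
  shows "(\<Sum>j\<in>UNIV. (norm (grad_at l j))\<^sup>2) \<le> 2 * budget l"
proof -
  have "(norm (grad_at l j))\<^sup>2 \<le> 2 * (L\<^sup>2 * (norm (iterate l j - x_avg 0))\<^sup>2) + 2 * (norm (anchor_grad l j))\<^sup>2" for j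
  proof -
    have "(norm (grad_at l j))\<^sup>2
        \<le> 2 * (norm (grad_at l j - anchor_grad l j))\<^sup>2 + 2 * (norm (anchor_grad l j))\<^sup>2"
      using power2_norm_add_le[of "grad_at l j - anchor_grad l j" "anchor_grad l j"] by simp
    also have "(norm (grad_at l j - anchor_grad l j))\<^sup>2 \<le> L\<^sup>2 * (norm (iterate l j - x_avg 0))\<^sup>2"
      using power_mono[OF grad_at_dist_le[OF assms] norm_ge_zero, where n = 2] by (simp add: power_mult_distrib)
    finally show ?thesis by simp
  qed
  then have "(\<Sum>j\<in>UNIV. (norm (grad_at l j))\<^sup>2)
      \<le> (\<Sum>j\<in>UNIV. 2 * (L\<^sup>2 * (norm (iterate l j - x_avg 0))\<^sup>2) + 2 * (norm (anchor_grad l j))\<^sup>2)"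
    by (rule sum_mono)
  then show ?thesis by (simp add: sum.distrib sum_distrib_left)
qed

lemma consensus_err_iterate_Suc_le:
  assumes "l < m"
  shows "consensus_err (iterate (Suc l))
           \<le> rate * consensus_err (iterate l) + 4 * \<alpha>\<^sup>2 / q * budget l"
proof -
  let ?\<rho>2 = "(rho_w W)\<^sup>2"
  have "consensus_err (iterate (Suc l))
      \<le> ?\<rho>2 * (\<Sum>j\<in>UNIV. (norm ((iterate l j - x_avg l) - \<alpha> *\<^sub>R grad_at l j))\<^sup>2)"
    unfolding drr_inner.simps by (rule consensus_err_drr_step_le[OF W])
  also have "\<dots> \<le> (\<Sum>j\<in>UNIV. (1 + ?\<rho>2) / 2 * (norm (iterate l j - x_avg l))\<^sup>2
                                + 2 / q * (\<alpha>\<^sup>2 * (norm (grad_at l j))\<^sup>2))"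
    unfolding sum_distrib_left
  proof (rule sum_mono)
    fix j
    show "?\<rho>2 * (norm ((iterate l j - x_avg l) - \<alpha> *\<^sub>R grad_at l j))\<^sup>2
        \<le> (1 + ?\<rho>2) / 2 * (norm (iterate l j - x_avg l))\<^sup>2 + 2 / q * (\<alpha>\<^sup>2 * (norm (grad_at l j))\<^sup>2)"
      using scaled_power2_norm_diff_le[of ?\<rho>2 "iterate l j - x_avg l" "\<alpha> *\<^sub>R grad_at l j"] q_pos
      by (simp add: power_mult_distrib)
  qed
  also have "\<dots> = (1 + ?\<rho>2) / 2 * consensus_err (iterate l)
                  + 2 / q * \<alpha>\<^sup>2 * (\<Sum>j\<in>UNIV. (norm (grad_at l j))\<^sup>2)"
    by (simp add: consensus_err_def sum.distrib sum_distrib_left mult.assoc)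
  also have "\<dots> \<le> (1 + ?\<rho>2) / 2 * consensus_err (iterate l) + 2 / q * \<alpha>\<^sup>2 * (2 * budget l)"
    using sum_power2_norm_grad_at_le[OF assms] q_pos by (intro add_left_mono mult_left_mono) simp_all
  finally show ?thesis by (simp add: field_simps)
qed

lemma spread_le:
  assumes "l < m"
  shows "spread l \<le> consensus_err (iterate l) + 2 * \<alpha>\<^sup>2 * real l * (\<Sum>k<l. budget k)"
proof -
  define S where "S = (\<Sum>k<l. \<Sum>j\<in>UNIV. grad_at k j)"
  have "(norm S)\<^sup>2 \<le> real l * (\<Sum>k<l. (norm (\<Sum>j\<in>UNIV. grad_at k j))\<^sup>2)"
    unfolding S_def using power2_norm_sum_le[of "{..<l}"] by simp
  also have "\<dots> \<le> real l * (\<Sum>k<l. real CARD('n) * (2 * budget k))"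
  proof (intro mult_left_mono sum_mono)
    fix k assume "k \<in> {..<l}"
    then have "k < m" using assms by simp
    have "(norm (\<Sum>j\<in>UNIV. grad_at k j))\<^sup>2 \<le> real CARD('n) * (\<Sum>j\<in>UNIV. (norm (grad_at k j))\<^sup>2)"
      using power2_norm_sum_le[of UNIV "grad_at k"] by simp
    also have "\<dots> \<le> real CARD('n) * (2 * budget k)"
      using sum_power2_norm_grad_at_le[OF \<open>k < m\<close>] by (intro mult_left_mono) simp_all
    finally show "(norm (\<Sum>j\<in>UNIV. grad_at k j))\<^sup>2 \<le> real CARD('n) * (2 * budget k)" .
  qed simp
  finally have S_le: "(norm S)\<^sup>2 \<le> 2 * real CARD('n) * real l * (\<Sum>k<l. budget k)"
    by (simp add: sum_distrib_left mult_ac)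
  have "spread l = consensus_err (iterate l) + real CARD('n) * (norm (x_avg l - x_avg 0))\<^sup>2"
    by (rule sum_power2_norm_diff_eq)
  also have "real CARD('n) * (norm (x_avg l - x_avg 0))\<^sup>2 = \<alpha>\<^sup>2 / real CARD('n) * (norm S)\<^sup>2"
    using alpha_pos by (subst x_avg_eq) (simp add: S_def power2_eq_square field_simps)
  also have "\<alpha>\<^sup>2 / real CARD('n) * (norm S)\<^sup>2 \<le> 2 * \<alpha>\<^sup>2 * real l * (\<Sum>k<l. budget k)"
    using mult_left_mono[OF S_le, of "\<alpha>\<^sup>2 / real CARD('n)"] by (simp add: field_simps)
  finally show ?thesis by simp
qed

abbreviation "grad_error \<equiv> (1 / (real CARD('n) * real m)) *\<^sub>R
    (\<Sum>k<m. \<Sum>j\<in>UNIV. grad_at k j - anchor_grad k j)"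

lemma x_avg_epoch_eq:
  "x_avg m - x_avg 0 = - (real m * \<alpha>) *\<^sub>R (global_grad m g (x_avg 0) + grad_error)"
proof -
  have "(\<Sum>k<m. \<Sum>j\<in>UNIV. grad_at k j)
      = (\<Sum>k<m. \<Sum>j\<in>UNIV. grad_at k j - anchor_grad k j)
        + (real CARD('n) * real m) *\<^sub>R global_grad m g (x_avg 0)"
    using sum_permuted_grads[OF perms m_pos, where g = g and x = "avg_pt X"] by (simp add: sum_subtractf)
  then show ?thesis
    using m_pos by (subst x_avg_eq) (simp add: scaleR_add_right algebra_simps)
qed

lemma power2_norm_grad_error_le:
  "(norm grad_error)\<^sup>2 \<le> L\<^sup>2 / (real CARD('n) * real m) * (\<Sum>l<m. spread l)"
proof -
  define D where "D = (\<Sum>k<m. \<Sum>j\<in>UNIV. grad_at k j - anchor_grad k j)"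
  have "(norm D)\<^sup>2 \<le> real m * (\<Sum>k<m. (norm (\<Sum>j\<in>UNIV. grad_at k j - anchor_grad k j))\<^sup>2)"
    unfolding D_def using power2_norm_sum_le[of "{..<m}"] by simp
  also have "\<dots> \<le> real m * (\<Sum>k<m. real CARD('n) * (L\<^sup>2 * spread k))"
  proof (intro mult_left_mono sum_mono)
    fix k assume "k \<in> {..<m}"
    have "(norm (\<Sum>j\<in>UNIV. grad_at k j - anchor_grad k j))\<^sup>2
        \<le> real CARD('n) * (\<Sum>j\<in>UNIV. (norm (grad_at k j - anchor_grad k j))\<^sup>2)"
      using power2_norm_sum_le[of UNIV "\<lambda>j. grad_at k j - anchor_grad k j"] by simp
    also have "\<dots> \<le> real CARD('n) * (\<Sum>j\<in>UNIV. L\<^sup>2 * (norm (iterate k j - x_avg 0))\<^sup>2)"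
      using grad_at_dist_le \<open>k \<in> {..<m}\<close>
      by (intro mult_left_mono sum_mono) (simp_all add: power_mult_distrib[symmetric] power_mono)
    finally show "(norm (\<Sum>j\<in>UNIV. grad_at k j - anchor_grad k j))\<^sup>2
        \<le> real CARD('n) * (L\<^sup>2 * spread k)" by (simp add: sum_distrib_left)
  qed simp
  finally have "(norm D)\<^sup>2 \<le> real m * real CARD('n) * L\<^sup>2 * (\<Sum>l<m. spread l)"
    by (simp add: sum_distrib_left mult_ac)
  then show ?thesis
    using m_pos unfolding D_def[symmetric]
    by (simp add: power_mult_distrib power_divide field_simps power2_eq_square)
qed

lemma global_f_x_avg_epoch_le:
  assumes "L * real m * \<alpha> \<le> 1"
  shows "global_f m f (x_avg m) \<le> global_f m f (x_avg 0)
           - real m * \<alpha> / 2 * (norm (global_grad m g (x_avg 0)))\<^sup>2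
           + \<alpha> * L\<^sup>2 / (2 * real CARD('n)) * (\<Sum>l<m. spread l)"
proof -
  let ?d = "global_grad m g (x_avg 0)" and ?t = "real m * \<alpha>"
  have upper: "global_f m f (x_avg m)
      \<le> global_f m f (x_avg 0) + ?d \<bullet> (x_avg m - x_avg 0) + L / 2 * (norm (x_avg m - x_avg 0))\<^sup>2"
    by (rule Lipschitz_gradient_upper_bound[OF has_derivative_global_f[OF grad]
          global_grad_Lipschitz[OF m_pos lip]])
  have step: "?d \<bullet> (x_avg m - x_avg 0) + L / 2 * (norm (x_avg m - x_avg 0))\<^sup>2
      \<le> - (?t / 2) * (norm ?d)\<^sup>2 + ?t / 2 * (norm grad_error)\<^sup>2"
    unfolding x_avg_epoch_eq using alpha_pos assms
    by (intro gradient_step_bound) (simp_all add: mult_ac)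
  have "?t / 2 * (norm grad_error)\<^sup>2
      \<le> ?t / 2 * (L\<^sup>2 / (real CARD('n) * real m) * (\<Sum>l<m. spread l))"
    using power2_norm_grad_error_le alpha_pos by (intro mult_left_mono) simp_all
  also have "\<dots> = \<alpha> * L\<^sup>2 / (2 * real CARD('n)) * (\<Sum>l<m. spread l)"
    using m_pos by (simp add: field_simps)
  finally show ?thesis using upper step by simp
qed

lemma rate_nonneg: "0 \<le> rate" and rate_le_1: "rate \<le> 1"
  using q_pos by simp_all

lemma rate_power_eq: "rate ^ m = 1 - q / 2 * rate_sum"
proof -
  have eq: "1 - rate = q / 2" by (simp add: field_simps)
  have "rate ^ m = 1 - (1 - rate) * rate_sum" using one_diff_power_eq[of rate m] by linarith
  then show ?thesis by (simp only: eq)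
qed

lemma sum_budget_eq: "(\<Sum>l<m. budget l) = L\<^sup>2 * total_spread + anchor_budget"
  by (simp add: sum.distrib sum_distrib_left)

lemma consensus_err_epoch_le:
  "consensus_err (iterate m)
     \<le> (1 - q / 2 * rate_sum) * consensus_err X + 4 * \<alpha>\<^sup>2 / q * (L\<^sup>2 * total_spread + anchor_budget)"
  using linear_recursion_le[where e = "\<lambda>l. consensus_err (iterate l)" and a = "\<lambda>l. budget l"
      and N = m and l = m, OF rate_nonneg rate_le_1 _ budget_nonneg consensus_err_iterate_Suc_le,
      unfolded rate_power_eq sum_budget_eq]
    q_pos
  by simp

lemma total_spread_le:
  "total_spread \<le> rate_sum * consensus_err X
     + (4 * \<alpha>\<^sup>2 / q * real m + \<alpha>\<^sup>2 * (real m)\<^sup>2) * (L\<^sup>2 * total_spread + anchor_budget)"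
  using sum_le_linear_recursion[where e = "\<lambda>l. consensus_err (iterate l)" and a = "\<lambda>l. budget l"
      and v = "\<lambda>l. spread l" and \<beta> = "\<alpha>\<^sup>2" and m = m,
      OF rate_nonneg rate_le_1 _ budget_nonneg consensus_err_iterate_Suc_le spread_le zero_le_power2,
      unfolded sum_budget_eq]
    q_pos
  by simp

lemma lyapunov_epoch:
  fixes fb :: "'n \<Rightarrow> nat \<Rightarrow> real"
  assumes lower: "\<And>i l x. l < m \<Longrightarrow> f i l x \<ge> fb i l"
    and "0 < L"
    and theta: "L\<^sup>2 * (4 * \<alpha>\<^sup>2 / q * real m + \<alpha>\<^sup>2 * (real m)\<^sup>2) \<le> 1 / 48"
    and cross: "\<alpha>\<^sup>2 * L\<^sup>2 \<le> q ^ 3 / 1536"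
  defines "fbar \<equiv> INF z. global_f m f z"
  defines "B \<equiv> 2 * L * (fbar - (1 / (real m * real CARD('n))) * (\<Sum>i\<in>UNIV. \<Sum>l<m. fb i l))"
  defines "c \<equiv> 16 * \<alpha> * L\<^sup>2 / (real CARD('n) * q\<^sup>2)"
  shows "global_f m f (x_avg m) - fbar + c * consensus_err (iterate m)
     \<le> (1 + 12 * (real m)\<^sup>2 * \<alpha>^3 * L\<^sup>2 * (2 * L) * (4 + real m) / q
           + 384 * (2 * L) * \<alpha>^3 * L\<^sup>2 * real m / q^3) * (global_f m f (avg_pt X) - fbar + c * consensus_err X)
        - real m * \<alpha> / 4 * (norm (global_grad m g (avg_pt X)))\<^sup>2
        + 6 * real m * \<alpha>^3 * L\<^sup>2 * B * (real m * (real m + 4) + 32) / q^3"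
proof -
  have "global_f m f (x_avg m) - fbar \<le> (global_f m f (avg_pt X) - fbar)
      - real m * \<alpha> / 2 * (norm (global_grad m g (avg_pt X)))\<^sup>2 + \<alpha> * L\<^sup>2 / (2 * real CARD('n)) * total_spread"
    using global_f_x_avg_epoch_le[OF step_size_Lipschitz_le[OF q_pos _ theta]] by simp
  moreover have "anchor_budget \<le> real CARD('n) * real m * (2 * L * (global_f m f (avg_pt X) - fbar) + B)"
    unfolding B_def fbar_def drr_inner.simps(1)
    by (rule sum_power2_norm_permuted_grads_le[OF grad lip lower perms \<open>0 < L\<close> m_pos])
  moreover have "0 \<le> global_f m f (avg_pt X) - fbar"
    using INF_global_f_le[OF lower] by (simp add: fbar_def)
  moreover have "0 \<le> B"
    using INF_global_f_ge[where f = f and fb = fb and m = m, OF lower] \<open>0 < L\<close> by (simp add: B_def fbar_def)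
  moreover have "0 \<le> rate_sum" "0 \<le> anchor_budget" "0 \<le> consensus_err X" "1 \<le> real CARD('n)"
    by (simp_all add: consensus_err_def sum_nonneg Suc_le_eq)
  ultimately show ?thesis
    unfolding c_def using q_pos m_pos alpha_pos \<open>0 < L\<close>
    by (intro lyapunov_arith[OF _ _ _ _ _ _ _ _ _ _ _ _ theta cross _ consensus_err_epoch_le
          total_spread_le]) simp_all
qed

end

theorem lemma15:
  fixes W :: "real^'n^'n"
    and f :: "'n \<Rightarrow> nat \<Rightarrow> 'v::euclidean_space \<Rightarrow> real"
    and g :: "'n \<Rightarrow> nat \<Rightarrow> 'v \<Rightarrow> 'v"
    and fb :: "'n \<Rightarrow> nat \<Rightarrow> real"
    and m :: nat and L \<alpha> :: real
    and \<pi> :: "nat \<Rightarrow> 'n \<Rightarrow> nat \<Rightarrow> nat"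
    and x0 :: "'n \<Rightarrow> 'v" and t :: nat
  assumes m_pos: "m \<ge> 1"
    and W: "gossip_ok W"
    and grad: "\<And>i l x. l < m \<Longrightarrow> (f i l has_derivative (\<lambda>h. g i l x \<bullet> h)) (at x)"
    and lip: "\<And>i l x y. l < m \<Longrightarrow> norm (g i l x - g i l y) \<le> L * norm (x - y)"
    and lower: "\<And>i l x. l < m \<Longrightarrow> f i l x \<ge> fb i l"
    and perms: "\<And>s i. bij_betw (\<pi> s i) {..<m} {..<m}"
    and alpha_pos: "0 < \<alpha>"
    and alpha_le: "\<alpha> \<le> min ((1 - (rho_w W)\<^sup>2) / (4 * sqrt 3 * L * (real m + 2)))
                            ((1 - (rho_w W)\<^sup>2) powr (3/2) / (16 * sqrt 6 * L))"
  shows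
    "let n = real CARD('n); \<rho> = rho_w W;
         fbar = (INF x. global_f m f x);
         A = 2 * L;
         B2 = 2 * L * (fbar - (1 / (real m * n)) * (\<Sum>i\<in>UNIV. \<Sum>l<m. fb i l));
         xs = drr W g (\<lambda>_. \<alpha>) m \<pi> x0;
         Q = (\<lambda>s. global_f m f (avg_pt (xs s)) - fbar
                  + 16 * \<alpha> * L\<^sup>2 / (n * (1 - \<rho>\<^sup>2)\<^sup>2) * consensus_err (xs s))
     in Q (Suc t) \<le> (1 + 12 * (real m)\<^sup>2 * \<alpha>^3 * L\<^sup>2 * A * (4 + real m) / (1 - \<rho>\<^sup>2)
                      + 384 * A * \<alpha>^3 * L\<^sup>2 * real m / (1 - \<rho>\<^sup>2)^3) * Q t
                 - real m * \<alpha> / 4 * (norm (global_grad m g (avg_pt (xs t))))\<^sup>2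
                 + 6 * real m * \<alpha>^3 * L\<^sup>2 * B2 * (real m * (real m + 4) + 32) / (1 - \<rho>\<^sup>2)^3"
proof -
  have "0 \<le> L"
  proof -
    obtain b :: 'v where "b \<in> Basis" using nonempty_Basis by blast
    then have "norm (g undefined 0 b - g undefined 0 0) \<le> L"
      using lip[of 0 undefined b 0] m_pos by simp
    then show ?thesis using norm_ge_zero order_trans by blast
  qed
  note step_size = step_size_consequences[OF alpha_pos this alpha_le]
  have "rho_w W < 1"
    using step_size(2) abs_square_less_1[of "rho_w W"] by simp
  interpret drr_epoch W f g m L \<alpha> "\<pi> t" "drr W g (\<lambda>_. \<alpha>) m \<pi> x0 t"
    using m_pos W grad lip perms alpha_pos \<open>rho_w W < 1\<close> by unfold_locales auto
  have theta: "L\<^sup>2 * (4 * \<alpha>\<^sup>2 / q * real m + \<alpha>\<^sup>2 * (real m)\<^sup>2) \<le> 1 / 48"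
    using step_size m_pos by (intro step_size_theta_le) simp_all
  show ?thesis
    using lyapunov_epoch[OF lower step_size(1) theta step_size(4)] by (simp add: Let_def)
qed

end
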